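(* Let $(p^l,W^l)_{l\ge0}$ be the iterates of the $k$-th order $m$-means algorithm described in the context, and assume no set $W_i^l$ is ever empty (so no restart occurs). Then the sequence $\hat{\mathcal H}(p^l_1,\dots,p^l_m,W^l_1,\dots,W^l_m)$ is nonincreasing and converges. If moreover $f(x_1,\dots,x_k)=g(x_1)+\dots+g(x_k)$ for a function $g$ such that for every nonempty $W\subset Q$ the map $p\mapsto\sum_{q\in W}w_q g(\|q-p\|)$ has a unique minimizer on $\mathbb{R}^n$, then the algorithm terminates after finitely many steps.
   Context: $Q=\{q_1,\dots,q_N\}\subset\mathbb{R}^n$ is a finite point set with positive weights $w_q$, $q\in Q$; $m>k\ge1$ sensors with positions $p_1,\dots,p_m\in\mathbb{R}^n$. $f:[0,\infty)^k\to\mathbb{R}$ is nondecreasing and symmetric in its arguments, and the minimization below has a unique solution. Assignment: each $q\in Q$ is assigned to a set of exactly $k$ indices consisting of $k$ sensors nearest to $q$ (ties broken by a fixed rule, e.g. lexicographic order of index sets), and $W_i$ is the set of points assigned to sensor $i$. Extended performance function: $\hat{\mathcal H}(p_1,\dots,p_m,W_1,\dots,W_m)=\sum_{i_1,\dots,i_k\text{ pairwise distinct}}\sum_{q\in W_{i_1}\cap\dots\cap W_{i_k}}w_q f(\|q-p_{i_1}\|,\dots,\|q-p_{i_k}\|)$. Given $W_1,\dots,W_m$, $(C_1,\dots,C_m)=\operatorname{argmin}_{\hat p_1,\dots,\hat p_m\in\mathbb{R}^n}\hat{\mathcal H}(\hat p_1,\dots,\hat p_m,W_1,\dots,W_m)$.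 Algorithm: (1) start with initial $p_i$ and compute the assignment sets $W_i$; (2) set $p_i=C_i$ for all $i$; (3) recompute the $W_i$ from the new $p_i$ (restart at (1) if some $W_i$ is empty); (4) stop if $\hat{\mathcal H}$ was not decreased by steps (2) or (3), otherwise return to (2). *)

theory Defs
  imports "HOL-Analysis.Analysis"
begin

text \<open>Sensors are indexed by a finite type 's (so m = CARD('s)); points live in a
Euclidean space 'a (= R^n).
The function f : [0,\<infinity>)^k \<rightarrow> R is modelled on lists of length k.\<close>

definition f_nondecreasing :: "nat \<Rightarrow> (real list \<Rightarrow> real) \<Rightarrow> bool" where
  "f_nondecreasing k f \<longleftrightarrow>
     (\<forall>xs ys. length xs = k \<and> length ys = k \<and>
        (\<forall>i<k. 0 \<le> xs ! i \<and> xs ! i \<le> ys ! i) \<longrightarrow> f xs \<le> f ys)"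

definition f_symmetric :: "nat \<Rightarrow> (real list \<Rightarrow> real) \<Rightarrow> bool" where
  "f_symmetric k f \<longleftrightarrow>
     (\<forall>xs ys. length xs = k \<and> length ys = k \<and> (\<forall>x\<in>set xs. 0 \<le> x) \<and>
        mset xs = mset ys \<longrightarrow> f xs = f ys)"

definition nearest_set :: "nat \<Rightarrow> ('s \<Rightarrow> 'a::metric_space) \<Rightarrow> 'a \<Rightarrow> 's set \<Rightarrow> bool" where
  "nearest_set k p q S \<longleftrightarrow>
     card S = k \<and> (\<forall>i\<in>S. \<forall>j. j \<notin> S \<longrightarrow> dist q (p i) \<le> dist q (p j))"

text \<open>Assignment sets W_i, given a fixed (deterministic) tie-breaking selection rule sel.\<close>
definition assign_sets :: "'a set \<Rightarrow> (('s \<Rightarrow> 'a) \<Rightarrow> 'a \<Rightarrow> 's set) \<Rightarrow> ('s \<Rightarrow> 'a) \<Rightarrow> 's \<Rightarrow> 'a set" where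
  "assign_sets Q sel p i = {q\<in>Q. i \<in> sel p q}"

definition Hhat :: "nat \<Rightarrow> (real list \<Rightarrow> real) \<Rightarrow> ('a \<Rightarrow> real) \<Rightarrow>
    ('s::finite \<Rightarrow> 'a::metric_space) \<Rightarrow> ('s \<Rightarrow> 'a set) \<Rightarrow> real" where
  "Hhat k f w p W =
     (\<Sum>is\<in>{is. length is = k \<and> distinct is}.
        \<Sum>q\<in>(\<Inter>i\<in>set is. W i). w q * f (map (\<lambda>i. dist q (p i)) is))"

definition is_Hhat_minimizer :: "nat \<Rightarrow> (real list \<Rightarrow> real) \<Rightarrow> ('a \<Rightarrow> real) \<Rightarrow>
    ('s::finite \<Rightarrow> 'a::metric_space) \<Rightarrow> ('s \<Rightarrow> 'a set) \<Rightarrow> bool" where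
  "is_Hhat_minimizer k f w c W \<longleftrightarrow> (\<forall>c'. Hhat k f w c W \<le> Hhat k f w c' W)"

end

theory Submission
  imports Defs
begin

text \<open>
  Both half-steps of the iteration decrease \<open>Hhat\<close>. The centre update does so by the choice
  of the minimizer. The reassignment does so point by point: a set of \<open>k\<close> nearest sensors
  can be matched bijectively with any other \<open>k\<close>-set so that distances do not increase,
  and this bijection transports the \<open>k\<close>-tuples of one set onto those of the other with
  smaller \<open>f\<close>-values, \<open>f\<close> being nondecreasing.
  Hence the costs \<open>H l\<close> interlace with the minimal costs \<open>m l\<close> of the assignments:
  \<open>H (l + 1) \<le> m l \<le> H l\<close>. There are only finitely many assignments, so \<open>m\<close>
  takes finitely many values; \<open>H\<close> is therefore bounded below, and it cannot decrease
  strictly forever, since \<open>m\<close> would then decrease strictly every two steps.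
\<close>

definition point_cost ::
    "nat \<Rightarrow> (real list \<Rightarrow> real) \<Rightarrow> ('s \<Rightarrow> 'a::metric_space) \<Rightarrow> 'a \<Rightarrow> 's set \<Rightarrow> real" where
  "point_cost k f p q S =
     (\<Sum>is | length is = k \<and> distinct is \<and> set is \<subseteq> S. f (map (\<lambda>i. dist q (p i)) is))"

lemma finite_distinct_lists: "finite {is::'s::finite list. length is = k \<and> distinct is}"
proof (rule finite_subset)
  show "finite {xs. set xs \<subseteq> (UNIV :: 's set) \<and> distinct xs}"
    by (rule finite_subset_distinct) simp
qed auto

lemma Hhat_eq_sum_point_cost:
  fixes p :: "'s::finite \<Rightarrow> 'a::metric_space"
  assumes "1 \<le> k" and finQ: "finite Q" and V: "\<And>i. V i = {q\<in>Q. i \<in> S q}"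
  shows "Hhat k f w p V = (\<Sum>q\<in>Q. w q * point_cost k f p q (S q))"
proof -
  let ?L = "{is::'s list. length is = k \<and> distinct is}"
  let ?F = "\<lambda>q is. w q * f (map (\<lambda>i. dist q (p i)) is)"
  have inter: "(\<Inter>i\<in>set is. V i) = {q\<in>Q. set is \<subseteq> S q}" if "is \<in> ?L" for "is"
  proof -
    from that \<open>1 \<le> k\<close> obtain i where "i \<in> set is" by (cases "is") auto
    then show ?thesis by (auto simp: V)
  qed
  have "Hhat k f w p V = (\<Sum>is\<in>?L. \<Sum>q\<in>Q. if set is \<subseteq> S q then ?F q is else 0)"
    unfolding Hhat_def by (rule sum.cong[OF refl]) (simp add: inter sum.inter_filter[OF finQ])
  also have "\<dots> = (\<Sum>q\<in>Q. \<Sum>is\<in>?L. if set is \<subseteq> S q then ?F q is else 0)"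
    by (rule sum.swap)
  also have "\<dots> = (\<Sum>q\<in>Q. \<Sum>is\<in>{is\<in>?L. set is \<subseteq> S q}. ?F q is)"
    by (simp only: sum.inter_filter[OF finite_distinct_lists])
  also have "\<dots> = (\<Sum>q\<in>Q. w q * point_cost k f p q (S q))"
    by (simp add: point_cost_def sum_distrib_left)
  finally show ?thesis .
qed

lemma bij_betw_closer:
  fixes d :: "'s \<Rightarrow> real"
  assumes "finite S" "finite T" "card S = card T"
    and closest: "\<forall>i\<in>S. \<forall>j. j \<notin> S \<longrightarrow> d i \<le> d j"
  obtains \<pi> where "bij_betw \<pi> T S" "\<forall>i\<in>T. d (\<pi> i) \<le> d i"
proof -
  have "card (T - S) = card (S - T)"
    using assms(1-3) by (simp add: card_Diff_subset_Int Int_commute)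
  then obtain h where h: "bij_betw h (T - S) (S - T)"
    using finite_same_card_bij[of "T - S" "S - T"] assms(1,2) by auto
  define \<pi> where "\<pi> i = (if i \<in> S then i else h i)" for i
  have "bij_betw \<pi> (T - S) (S - T)"
    using h by (rule bij_betw_cong[THEN iffD1, rotated]) (simp add: \<pi>_def)
  moreover have "bij_betw \<pi> (T \<inter> S) (S \<inter> T)"
    by (auto simp: \<pi>_def bij_betw_def inj_on_def)
  ultimately have "bij_betw \<pi> ((T - S) \<union> (T \<inter> S)) ((S - T) \<union> (S \<inter> T))"
    by (rule bij_betw_combine) blast
  then have "bij_betw \<pi> T S"
    by (simp add: Un_Diff_Int)
  moreover have "d (\<pi> i) \<le> d i" if "i \<in> T" for i
  proof (cases "i \<in> S")
    case False
    then have "h i \<in> S"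
      using h that by (auto simp: bij_betw_def)
    with False closest show ?thesis
      by (simp add: \<pi>_def)
  qed (simp add: \<pi>_def)
  ultimately show ?thesis
    using that by blast
qed

lemma bij_betw_map_distinct_lists:
  assumes "bij_betw \<pi> T S"
  shows "bij_betw (map \<pi>)
           {is. length is = k \<and> distinct is \<and> set is \<subseteq> T}
           {is. length is = k \<and> distinct is \<and> set is \<subseteq> S}"
proof (rule bij_betw_subset[OF bij_lists[OF assms]])
  show "{is. length is = k \<and> distinct is \<and> set is \<subseteq> T} \<subseteq> lists T" by auto
  have inj: "inj_on \<pi> T" and img: "\<pi> ` T = S"
    using assms by (auto simp: bij_betw_def)
  show "map \<pi> ` {is. length is = k \<and> distinct is \<and> set is \<subseteq> T}
      = {is. length is = k \<and> distinct is \<and> set is \<subseteq> S}"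
  proof (intro equalityI subsetI)
    fix ys assume "ys \<in> map \<pi> ` {is. length is = k \<and> distinct is \<and> set is \<subseteq> T}"
    then show "ys \<in> {is. length is = k \<and> distinct is \<and> set is \<subseteq> S}"
      using inj img by (fastforce simp: distinct_map intro: inj_on_subset)
  next
    fix ys assume ys: "ys \<in> {is. length is = k \<and> distinct is \<and> set is \<subseteq> S}"
    then have "ys \<in> map \<pi> ` lists T"
      using img lists_image[of \<pi> T] by auto
    then obtain xs where "xs \<in> lists T" "ys = map \<pi> xs" by blast
    with ys show "ys \<in> map \<pi> ` {is. length is = k \<and> distinct is \<and> set is \<subseteq> T}"
      by (auto simp: distinct_map)
  qed
qed

lemma point_cost_nearest_le:
  fixes p :: "'s::finite \<Rightarrow> 'a::metric_space"
  assumes fmono: "f_nondecreasing k f" and near: "nearest_set k p q S" and "card T = k"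
  shows "point_cost k f p q S \<le> point_cost k f p q T"
proof -
  let ?d = "\<lambda>i. dist q (p i)"
  let ?L = "\<lambda>S. {is. length is = k \<and> distinct is \<and> set is \<subseteq> S}"
  obtain \<pi> where \<pi>: "bij_betw \<pi> T S" and closer: "\<forall>i\<in>T. ?d (\<pi> i) \<le> ?d i"
    using bij_betw_closer[of S T ?d] near \<open>card T = k\<close> unfolding nearest_set_def by auto
  have "point_cost k f p q S = (\<Sum>is\<in>?L T. f (map ?d (map \<pi> is)))"
    unfolding point_cost_def
    using sum.reindex_bij_betw[OF bij_betw_map_distinct_lists[OF \<pi>], of "\<lambda>is. f (map ?d is)"]
    by simp
  also have "\<dots> \<le> point_cost k f p q T"
    unfolding point_cost_def
  proof (rule sum_mono)
    fix "is" assume "is \<in> ?L T"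
    then have "length is = k" "\<forall>j<k. is ! j \<in> T"
      by auto
    then have "\<forall>j<k. 0 \<le> map ?d (map \<pi> is) ! j \<and> map ?d (map \<pi> is) ! j \<le> map ?d is ! j"
      using closer by auto
    then show "f (map ?d (map \<pi> is)) \<le> f (map ?d is)"
      using fmono \<open>is \<in> ?L T\<close> unfolding f_nondecreasing_def by simp
  qed
  finally show ?thesis .
qed

lemma Hhat_assign_sets_le:
  fixes Q :: "'a::metric_space set" and p p' :: "'s::finite \<Rightarrow> 'a"
  assumes "1 \<le> k" "finite Q" and wnn: "\<forall>q\<in>Q. 0 \<le> w q" and fmono: "f_nondecreasing k f"
    and sel: "\<forall>p. \<forall>q\<in>Q. nearest_set k p q (sel p q)"
  shows "Hhat k f w p (assign_sets Q sel p) \<le> Hhat k f w p (assign_sets Q sel p')"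
proof -
  have cost: "Hhat k f w p (assign_sets Q sel p'') = (\<Sum>q\<in>Q. w q * point_cost k f p q (sel p'' q))"
    for p''
    by (rule Hhat_eq_sum_point_cost[OF assms(1,2)]) (simp add: assign_sets_def)
  have "w q * point_cost k f p q (sel p q) \<le> w q * point_cost k f p q (sel p' q)" if "q \<in> Q" for q
    using point_cost_nearest_le[OF fmono, of p q "sel p q" "sel p' q"] sel wnn that
    by (auto simp: nearest_set_def intro: mult_left_mono)
  then show ?thesis
    unfolding cost by (rule sum_mono)
qed

definition Hhat_min ::
    "nat \<Rightarrow> (real list \<Rightarrow> real) \<Rightarrow> ('a \<Rightarrow> real) \<Rightarrow> ('s::finite \<Rightarrow> 'a::metric_space set) \<Rightarrow> real" where
  "Hhat_min k f w V = Hhat k f w (SOME c. is_Hhat_minimizer k f w c V) V"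

lemma Hhat_minimizer_eq_Hhat_min:
  assumes "is_Hhat_minimizer k f w c V"
  shows "Hhat k f w c V = Hhat_min k f w V"
proof -
  have "is_Hhat_minimizer k f w (SOME c. is_Hhat_minimizer k f w c V) V"
    using someI[where P = "\<lambda>c. is_Hhat_minimizer k f w c V", OF assms] .
  with assms show ?thesis
    unfolding Hhat_min_def is_Hhat_minimizer_def by (blast intro: order.antisym)
qed

lemma finite_range_assign_sets:
  fixes sel :: "('s::finite \<Rightarrow> 'a) \<Rightarrow> 'a \<Rightarrow> 's set"
  assumes "finite Q"
  shows "finite (range (assign_sets Q sel))"
proof (rule finite_subset)
  show "range (assign_sets Q sel) \<subseteq> Pi UNIV (\<lambda>_. Pow Q)"
    by (auto simp: assign_sets_def)
  show "finite (Pi UNIV (\<lambda>_::'s. Pow Q))"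
    using finite_PiE[of UNIV "\<lambda>_::'s. Pow Q"] assms by (simp add: PiE_UNIV_domain)
qed

lemma finite_range_not_two_step_decreasing:
  fixes a :: "nat \<Rightarrow> 'b::linorder"
  assumes "finite (range a)"
  shows "\<exists>l. \<not> a (Suc (Suc l)) < a l"
proof (rule ccontr)
  assume "\<nexists>l. \<not> a (Suc (Suc l)) < a l"
  then have step: "a (Suc (Suc (2 * j))) < a (2 * j)" for j
    by simp
  have less: "a (2 * j) < a (2 * i)" if "i < j" for i j
    using that by (induct i j rule: less_Suc_induct) (auto simp: step intro: less_trans)
  have "inj (\<lambda>j. a (2 * j))"
  proof (rule injI)
    fix i j
    assume "a (2 * i) = a (2 * j)"
    then show "i = j"
      using less[of i j] less[of j i] by (cases i j rule: linorder_cases) auto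
  qed
  then have "infinite (range (\<lambda>j. a (2 * j)))"
    by (rule range_inj_infinite)
  moreover have "range (\<lambda>j. a (2 * j)) \<subseteq> range a"
    by auto
  ultimately show False
    using assms finite_subset by blast
qed

lemma interlaced_sequence_finite_range:
  fixes H m :: "nat \<Rightarrow> real"
  assumes m_le_H: "\<And>l. m l \<le> H l" and H_le_m: "\<And>l. H (Suc l) \<le> m l"
    and fin: "finite (range m)"
  shows "\<forall>l. H (Suc l) \<le> H l" and "convergent H" and "\<exists>l. \<not> H (Suc l) < H l"
proof -
  show dec: "\<forall>l. H (Suc l) \<le> H l"
    using H_le_m m_le_H order_trans by blast
  have "Min (range m) \<le> m l" for l
    using fin by (rule Min_le) simp
  then have "\<forall>l. Min (range m) \<le> H l"
    using m_le_H order_trans by blast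
  then obtain L where "H \<longlonglongrightarrow> L"
    using decseq_convergent[of H] decseq_SucI[of H] dec by blast
  then show "convergent H"
    by (auto simp: convergent_def)
  show "\<exists>l. \<not> H (Suc l) < H l"
  proof (rule ccontr)
    assume "\<nexists>l. \<not> H (Suc l) < H l"
    then have "H (Suc (Suc l)) < H (Suc l)" for l
      by simp
    then have "m (Suc (Suc l)) < m l" for l
      using m_le_H[of "Suc (Suc l)"] H_le_m[of l] by (meson le_less_trans less_le_trans)
    then show False
      using finite_range_not_two_step_decreasing[OF fin] by blast
  qed
qed

theorem mainTheorem7:
  fixes Q :: "'a::euclidean_space set"
    and w :: "'a \<Rightarrow> real"
    and k :: nat
    and f :: "real list \<Rightarrow> real"
    and sel :: "('s::finite \<Rightarrow> 'a) \<Rightarrow> 'a \<Rightarrow> 's set"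
    and P :: "nat \<Rightarrow> 's \<Rightarrow> 'a"
    and W :: "nat \<Rightarrow> 's \<Rightarrow> 'a set"
  assumes finQ: "finite Q"
    and wpos: "\<forall>q\<in>Q. 0 < w q"
    and k1: "1 \<le> k"
    and mk: "k < CARD('s)"
    and fmono: "f_nondecreasing k f"
    and fsym: "f_symmetric k f"
    and sel_ok: "\<forall>p. \<forall>q\<in>Q. nearest_set k p q (sel p q)"
    and W_def: "\<forall>l. W l = assign_sets Q sel (P l)"
    and W_ne: "\<forall>l i. W l i \<noteq> {}"
    and unique_min: "\<forall>l. \<exists>!c. is_Hhat_minimizer k f w c (W l)"
    and P_step: "\<forall>l. is_Hhat_minimizer k f w (P (Suc l)) (W l)"
  shows "(\<forall>l. Hhat k f w (P (Suc l)) (W (Suc l)) \<le> Hhat k f w (P l) (W l))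
       \<and> convergent (\<lambda>l. Hhat k f w (P l) (W l))
       \<and> ((\<exists>g :: real \<Rightarrow> real.
              (\<forall>xs. length xs = k \<and> (\<forall>x\<in>set xs. 0 \<le> x) \<longrightarrow> f xs = sum_list (map g xs))
            \<and> (\<forall>V. V \<subseteq> Q \<and> V \<noteq> {} \<longrightarrow>
                  (\<exists>!p. \<forall>p'. (\<Sum>q\<in>V. w q * g (norm (q - p))) \<le> (\<Sum>q\<in>V. w q * g (norm (q - p'))))))
          \<longrightarrow> (\<exists>l. \<not> (Hhat k f w (P (Suc l)) (W (Suc l)) < Hhat k f w (P l) (W l))))"
proof -
  let ?m = "\<lambda>l. Hhat_min k f w (W l)"
  have m_eq: "Hhat k f w (P (Suc l)) (W l) = ?m l" for l
    using P_step Hhat_minimizer_eq_Hhat_min by blast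
  have m_le_H: "?m l \<le> Hhat k f w (P l) (W l)" for l
    using P_step m_eq unfolding is_Hhat_minimizer_def by metis
  have H_le_m: "Hhat k f w (P (Suc l)) (W (Suc l)) \<le> ?m l" for l
  proof -
    have "Hhat k f w (P (Suc l)) (W (Suc l)) \<le> Hhat k f w (P (Suc l)) (W l)"
      using Hhat_assign_sets_le[OF k1 finQ _ fmono sel_ok, of w "P (Suc l)" "P l"] wpos W_def
      by (simp add: less_imp_le)
    then show ?thesis
      by (simp only: m_eq)
  qed
  have "range W \<subseteq> range (assign_sets Q sel)"
    using W_def by auto
  then have "finite (range W)"
    using finite_range_assign_sets[OF finQ] by (rule finite_subset)
  then have "finite (range ?m)"
    by (rule finite_range_imageI)
  then show ?thesis
    using interlaced_sequence_finite_range[of ?m "\<lambda>l. Hhat k f w (P l) (W l)", OF m_le_H H_le_m]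
    by blast
qed

end
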